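(* Let $\mathcal{E}=(E,\leq,\sharp)$ be a prime event structure and $C$ a configuration of $\mathcal{E}$. (i) If $C\xrightarrow{e}C'$ is a step of $\mathcal{E}$, then $\emptyset\triangleright\textsc{espsi}(\mathcal{E},C)\xrightarrow{\overline{e}e}\textsc{espsi}(\mathcal{E},C')$. (ii) Conversely, if $\emptyset\triangleright\textsc{espsi}(\mathcal{E},C)\xrightarrow{\overline{e}e}P'$ for some process $P'$, then there is a configuration $C'$ with $C\xrightarrow{e}C'$ and $P'=\textsc{espsi}(\mathcal{E},C')$.
   Context: A prime event structure is a triple $\mathcal{E}=(E,\leq,\sharp)$ where $E$ is a set of events (names from a nominal set), $\leq$ is a partial order on $E$ with $\{d\mid d\leq e\}$ finite for every $e$, and $\sharp$ is an irreflexive symmetric relation on $E$ with conflict heredity ($d\leq e$ and $d\sharp f$ imply $e\sharp f$). A configuration is a finite, conflict-free, downward-closed subset of $E$. A step $C\xrightarrow{e}C'$ holds iff $C,C'$ are configurations, $e\notin C$ and $C'=C\cup\{e\}$. Psi-calculus fragment. Processes: assertion processes $(\!|\Psi|\!)$, output prefixes $\overline{M}\langle N\rangle.P$, case processes $\mathbf{case}\ \varphi_1:P_1,\dots,\varphi_n:P_n$, and parallel compositions (also of infinite families). Frames: $\mathcal{F}((\!|\Psi|\!))=\Psi$, $\mathcal{F}(P\mid Q)=\mathcal{F}(P)\otimes\mathcal{F}(Q)$ (composition over all components for families), and the frame of prefixed and case processes is the unit $\mathbf{1}$. Transitions $\Psi\triangleright P\xrightarrow{\alpha}P'$ are generated by: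 (Out) if $\Psi\vdash M\leftrightarrow K$ then $\Psi\triangleright\overline{M}\langle N\rangle.P\xrightarrow{\overline{K}N}P$; (Case) if $\Psi\triangleright P_i\xrightarrow{\alpha}P'$ and $\Psi\vdash\varphi_i$ then $\Psi\triangleright\mathbf{case}\ \tilde\varphi:\tilde P\xrightarrow{\alpha}P'$; (Par) if $\Psi\otimes\mathcal{F}(Q)\triangleright P\xrightarrow{\alpha}P'$ then $\Psi\triangleright P\mid Q\xrightarrow{\alpha}P'\mid Q$, symmetrically for $Q$, and for a parallel family one component moves in context $\Psi$ composed with the frames of all other components, the others remaining unchanged. Assertion processes have no transitions. Event-psi instance over $E$: terms are elements of $E$; conditions are pairs $(L,R)$ of subsets of $E$; assertions are subsets of $E$; $\otimes=\cup$; $\mathbf{1}=\emptyset$; entailment: $\Psi\vdash(L,R)$ iff $L\subseteq\Psi$ and $\Psi\cap R=\emptyset$, and $\Psi\vdash a\leftrightarrow b$ iff $a=b$. Translation: $\textsc{espsi}(\mathcal{E},C)=\big|_{e\in E}P_e$ where $P_e=(\!|\{e\}|\!)$ if $e\in C$ and otherwise $P_e=\mathbf{case}\ \varphi_e:\overline{e}\langle e\rangle.(\!|\{e\}|\!)$, with $\varphi_e=(\{d\in E\mid d\leq e,\ d\neq e\},\{d\in E\mid d\sharp e\})$. Processes are compared as $E$-indexed parallel families. *)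

theory Defs
  imports Main
begin

definition prime_es :: "'a set \<Rightarrow> ('a \<Rightarrow> 'a \<Rightarrow> bool) \<Rightarrow> ('a \<Rightarrow> 'a \<Rightarrow> bool) \<Rightarrow> bool" where
  "prime_es E leq confl \<longleftrightarrow>
     (\<forall>d e. leq d e \<longrightarrow> d \<in> E \<and> e \<in> E) \<and>
     (\<forall>e\<in>E. leq e e) \<and>
     (\<forall>d e. leq d e \<and> leq e d \<longrightarrow> d = e) \<and>
     (\<forall>c d e. leq c d \<and> leq d e \<longrightarrow> leq c e) \<and>
     (\<forall>e\<in>E. finite {d. leq d e}) \<and>
     (\<forall>d e. confl d e \<longrightarrow> d \<in> E \<and> e \<in> E) \<and>
     (\<forall>e. \<not> confl e e) \<and>
     (\<forall>d e. confl d e \<longrightarrow> confl e d) \<and>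
     (\<forall>d e f. leq d e \<and> confl d f \<longrightarrow> confl e f)"

definition configuration :: "'a set \<Rightarrow> ('a \<Rightarrow> 'a \<Rightarrow> bool) \<Rightarrow> ('a \<Rightarrow> 'a \<Rightarrow> bool) \<Rightarrow> 'a set \<Rightarrow> bool" where
  "configuration E leq confl C \<longleftrightarrow>
     C \<subseteq> E \<and> finite C \<and>
     (\<forall>d\<in>C. \<forall>e\<in>C. \<not> confl d e) \<and>
     (\<forall>e\<in>C. \<forall>d. leq d e \<longrightarrow> d \<in> C)"

definition es_step :: "'a set \<Rightarrow> ('a \<Rightarrow> 'a \<Rightarrow> bool) \<Rightarrow> ('a \<Rightarrow> 'a \<Rightarrow> bool) \<Rightarrow> 'a set \<Rightarrow> 'a \<Rightarrow> 'a set \<Rightarrow> bool" where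
  "es_step E leq confl C e C' \<longleftrightarrow>
     configuration E leq confl C \<and> configuration E leq confl C' \<and> e \<notin> C \<and> C' = insert e C"

text \<open>Terms: events 'a. Conditions: pairs (L,R) of event sets. Assertions: event sets.
Composition is union, unit is the empty set.\<close>

type_synonym 'a cond = "'a set \<times> 'a set"

datatype 'a proc =
    Assn "'a set"
  | Out 'a 'a "'a proc"
  | Case "('a cond \<times> 'a proc) list"
  | Par "'a proc" "'a proc"
  | Fam "'a set" "'a \<Rightarrow> 'a proc"

datatype 'a act = OutAct 'a 'a

definition entails_cond :: "'a set \<Rightarrow> 'a cond \<Rightarrow> bool" where
  "entails_cond \<Psi> \<phi> \<longleftrightarrow> fst \<phi> \<subseteq> \<Psi> \<and> \<Psi> \<inter> snd \<phi> = {}"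

definition chan_eq :: "'a set \<Rightarrow> 'a \<Rightarrow> 'a \<Rightarrow> bool" where
  "chan_eq \<Psi> a b \<longleftrightarrow> a = b"

primrec frame :: "'a proc \<Rightarrow> 'a set" where
  "frame (Assn \<Psi>) = \<Psi>"
| "frame (Out M N P) = {}"
| "frame (Case cs) = {}"
| "frame (Par P Q) = frame P \<union> frame Q"
| "frame (Fam I f) = (\<Union>i\<in>I. frame (f i))"

inductive trans :: "'a set \<Rightarrow> 'a proc \<Rightarrow> 'a act \<Rightarrow> 'a proc \<Rightarrow> bool" where
  tOut: "chan_eq \<Psi> M K \<Longrightarrow> trans \<Psi> (Out M N P) (OutAct K N) P"
| tCase: "i < length cs \<Longrightarrow> trans \<Psi> (snd (cs ! i)) \<alpha> P' \<Longrightarrow> entails_cond \<Psi> (fst (cs ! i))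
          \<Longrightarrow> trans \<Psi> (Case cs) \<alpha> P'"
| tParL: "trans (\<Psi> \<union> frame Q) P \<alpha> P' \<Longrightarrow> trans \<Psi> (Par P Q) \<alpha> (Par P' Q)"
| tParR: "trans (\<Psi> \<union> frame P) Q \<alpha> Q' \<Longrightarrow> trans \<Psi> (Par P Q) \<alpha> (Par P Q')"
| tFam: "i \<in> I \<Longrightarrow> trans (\<Psi> \<union> (\<Union>j\<in>I - {i}. frame (f j))) (f i) \<alpha> P'
          \<Longrightarrow> trans \<Psi> (Fam I f) \<alpha> (Fam I (f(i := P')))"

definition phi_e :: "'a set \<Rightarrow> ('a \<Rightarrow> 'a \<Rightarrow> bool) \<Rightarrow> ('a \<Rightarrow> 'a \<Rightarrow> bool) \<Rightarrow> 'a \<Rightarrow> 'a cond" where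
  "phi_e E leq confl e = ({d\<in>E. leq d e \<and> d \<noteq> e}, {d\<in>E. confl d e})"

definition espsi :: "'a set \<Rightarrow> ('a \<Rightarrow> 'a \<Rightarrow> bool) \<Rightarrow> ('a \<Rightarrow> 'a \<Rightarrow> bool) \<Rightarrow> 'a set \<Rightarrow> 'a proc" where
  "espsi E leq confl C =
     Fam E (\<lambda>e. if e \<in> C then Assn {e}
                else Case [(phi_e E leq confl e, Out e e (Assn {e}))])"

end

theory Submission
  imports Defs
begin

text \<open>Every transition of \<open>espsi E leq confl C\<close> is performed by a single component
\<open>P\<^sub>e\<close> with \<open>e \<notin> C\<close>, whose context is the frame of the other components, namely \<open>C\<close>.
So \<open>e\<close> can fire exactly when \<open>C\<close> entails the guard \<open>\<phi>\<^sub>e\<close>, i.e. when \<open>C\<close> contains all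
causes of \<open>e\<close> and nothing in conflict with \<open>e\<close>; this is precisely the condition for
\<open>C \<union> {e}\<close> to be a configuration. Firing turns \<open>P\<^sub>e\<close> into \<open>(|{e}|)\<close>, which yields
\<open>espsi E leq confl (C \<union> {e})\<close>.\<close>

definition event_proc :: "'a set \<Rightarrow> ('a \<Rightarrow> 'a \<Rightarrow> bool) \<Rightarrow> ('a \<Rightarrow> 'a \<Rightarrow> bool) \<Rightarrow> 'a set \<Rightarrow> 'a \<Rightarrow> 'a proc" where
  "event_proc E leq confl C e =
     (if e \<in> C then Assn {e} else Case [(phi_e E leq confl e, Out e e (Assn {e}))])"

lemma espsi_eq_Fam: "espsi E leq confl C = Fam E (event_proc E leq confl C)"
  unfolding espsi_def event_proc_def by simp

lemma frame_event_proc: "frame (event_proc E leq confl C e) = (if e \<in> C then {e} else {})"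
  unfolding event_proc_def by simp

lemma frame_other_event_procs:
  assumes "C \<subseteq> E" "i \<notin> C"
  shows "(\<Union>j\<in>E - {i}. frame (event_proc E leq confl C j)) = C"
  using assms by (auto simp: frame_event_proc split: if_splits)

lemma event_proc_fire:
  "(event_proc E leq confl C)(i := Assn {i}) = event_proc E leq confl (insert i C)"
  unfolding event_proc_def by auto

inductive_cases trans_FamE: "trans \<Psi> (Fam I f) \<alpha> P'"
inductive_cases trans_CaseE: "trans \<Psi> (Case cs) \<alpha> P'"
inductive_cases trans_OutE: "trans \<Psi> (Out M N P) \<alpha> P'"
inductive_cases trans_AssnE: "trans \<Psi> (Assn A) \<alpha> P'"

lemma trans_Fam_iff:
  "trans \<Psi> (Fam I f) \<alpha> P' \<longleftrightarrow>
     (\<exists>i\<in>I. \<exists>Q. trans (\<Psi> \<union> (\<Union>j\<in>I - {i}. frame (f j))) (f i) \<alpha> Q \<and> P' = Fam I (f(i := Q)))"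
proof
  assume "trans \<Psi> (Fam I f) \<alpha> P'"
  then show "\<exists>i\<in>I. \<exists>Q. trans (\<Psi> \<union> (\<Union>j\<in>I - {i}. frame (f j))) (f i) \<alpha> Q \<and> P' = Fam I (f(i := Q))"
    by (rule trans_FamE) blast
qed (auto intro: trans.tFam)

lemma trans_event_proc_iff:
  "trans \<Psi> (event_proc E leq confl C e) \<alpha> P' \<longleftrightarrow>
     e \<notin> C \<and> entails_cond \<Psi> (phi_e E leq confl e) \<and> \<alpha> = OutAct e e \<and> P' = Assn {e}"
proof
  assume tr: "trans \<Psi> (event_proc E leq confl C e) \<alpha> P'"
  have "e \<notin> C"
    using tr unfolding event_proc_def by (auto elim: trans_AssnE)
  with tr show "e \<notin> C \<and> entails_cond \<Psi> (phi_e E leq confl e) \<and> \<alpha> = OutAct e e \<and> P' = Assn {e}"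
    unfolding event_proc_def
    by (auto elim!: trans_CaseE trans_OutE simp: less_Suc_eq chan_eq_def)
next
  assume "e \<notin> C \<and> entails_cond \<Psi> (phi_e E leq confl e) \<and> \<alpha> = OutAct e e \<and> P' = Assn {e}"
  then show "trans \<Psi> (event_proc E leq confl C e) \<alpha> P'"
    unfolding event_proc_def
    by (auto intro!: trans.tCase[where i = 0] trans.tOut simp: chan_eq_def)
qed

lemma trans_espsi_iff:
  assumes "C \<subseteq> E"
  shows "trans \<Psi> (espsi E leq confl C) \<alpha> P' \<longleftrightarrow>
     (\<exists>e\<in>E. e \<notin> C \<and> entails_cond (\<Psi> \<union> C) (phi_e E leq confl e) \<and>
            \<alpha> = OutAct e e \<and> P' = espsi E leq confl (insert e C))"
  using assms
  by (auto simp: espsi_eq_Fam trans_Fam_iff trans_event_proc_iff frame_other_event_procs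
                 event_proc_fire)

lemma configuration_insert_iff_entails:
  assumes pes: "prime_es E leq confl" and conf: "configuration E leq confl C"
    and "e \<in> E" "e \<notin> C"
  shows "configuration E leq confl (insert e C) \<longleftrightarrow> entails_cond C (phi_e E leq confl e)"
proof -
  have leq_dom: "\<And>d e. leq d e \<Longrightarrow> d \<in> E"
    and confl_irrefl: "\<And>e. \<not> confl e e"
    and confl_sym: "\<And>d e. confl d e \<Longrightarrow> confl e d"
    using pes unfolding prime_es_def by blast+
  show ?thesis
    using conf \<open>e \<in> E\<close> leq_dom confl_irrefl confl_sym
    unfolding configuration_def entails_cond_def phi_e_def
    by (auto; blast)
qed

lemma es_step_iff_entails:
  assumes pes: "prime_es E leq confl" and conf: "configuration E leq confl C"
  shows "es_step E leq confl C e C' \<longleftrightarrow>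
     e \<in> E \<and> e \<notin> C \<and> entails_cond C (phi_e E leq confl e) \<and> C' = insert e C"
proof -
  have "configuration E leq confl (insert e C) \<Longrightarrow> e \<in> E"
    unfolding configuration_def by simp
  then show ?thesis
    using configuration_insert_iff_entails[OF pes conf, of e] conf
    unfolding es_step_def by auto
qed

theorem mainTheorem2:
  assumes pes: "prime_es E leq confl"
    and conf: "configuration E leq confl C"
  shows "(\<forall>e C'. es_step E leq confl C e C' \<longrightarrow>
            trans {} (espsi E leq confl C) (OutAct e e) (espsi E leq confl C'))
       \<and> (\<forall>e P'. trans {} (espsi E leq confl C) (OutAct e e) P' \<longrightarrow>
            (\<exists>C'. es_step E leq confl C e C' \<and> P' = espsi E leq confl C'))"
proof -
  have "C \<subseteq> E" using conf unfolding configuration_def by simp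
  then show ?thesis
    by (auto simp: trans_espsi_iff es_step_iff_entails[OF pes conf])
qed

end
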